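(* For all integers $1\le q\le k$, $g(k,q)\le u(k,q)$, where $g(k,q)$ is the smallest cardinality of a subset of $\{-1,+1\}^k$ intersecting every $(k-q)$-subcube, and $u(k,q)$ is the smallest cardinality of a set of uniqueness for $(\mathcal{B}^k_q)_+$.
   Context: Let $\mathcal{X}=\{-1,+1\}^k$. A $(k-q)$-subcube of $\mathcal{X}$ is a set obtained by fixing the values of exactly $q$ coordinates and letting the other $k-q$ coordinates range freely. For $L\subseteq\{1,\ldots,k\}$ let $w_L(x)=\prod_{j\in L}x_j$ (with $w_\emptyset\equiv 1$); $\mathcal{B}^k_q$ is the linear span of $\{w_L:|L|\le q\}$ and $(\mathcal{B}^k_q)_+=\{\varphi\in\mathcal{B}^k_q:\varphi\ge 0\}$. A set $U\subseteq\mathcal{X}$ is a set of uniqueness for $(\mathcal{B}^k_q)_+$ if the only $\varphi\in(\mathcal{B}^k_q)_+$ vanishing on $U$ is $\varphi\equiv 0$. *)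

theory Defs
  imports Complex_Main
begin

definition cube :: "nat \<Rightarrow> (nat \<Rightarrow> real) set" where
  "cube k = {x. (\<forall>j<k. x j = 1 \<or> x j = -1) \<and> (\<forall>j. k \<le> j \<longrightarrow> x j = 0)}"

text \<open>A (k-q)-subcube: fix exactly q coordinates Q to values a.\<close>
definition subcube :: "nat \<Rightarrow> nat set \<Rightarrow> (nat \<Rightarrow> real) \<Rightarrow> (nat \<Rightarrow> real) set" where
  "subcube k Q a = {x \<in> cube k. \<forall>j\<in>Q. x j = a j}"

definition is_subcube :: "nat \<Rightarrow> nat \<Rightarrow> (nat \<Rightarrow> real) set \<Rightarrow> bool" where
  "is_subcube k q S \<longleftrightarrow> (\<exists>Q a. Q \<subseteq> {..<k} \<and> card Q = q \<and>
      (\<forall>j\<in>Q. a j = 1 \<or> a j = -1) \<and> S = subcube k Q a)"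

definition walsh :: "nat set \<Rightarrow> (nat \<Rightarrow> real) \<Rightarrow> real" where
  "walsh L x = (\<Prod>j\<in>L. x j)"

definition Bkq :: "nat \<Rightarrow> nat \<Rightarrow> ((nat \<Rightarrow> real) \<Rightarrow> real) set" where
  "Bkq k q = {\<phi>. \<exists>c :: nat set \<Rightarrow> real. \<forall>x\<in>cube k.
      \<phi> x = (\<Sum>L\<in>{L. L \<subseteq> {..<k} \<and> card L \<le> q}. c L * walsh L x)}"

definition Bkq_plus :: "nat \<Rightarrow> nat \<Rightarrow> ((nat \<Rightarrow> real) \<Rightarrow> real) set" where
  "Bkq_plus k q = {\<phi> \<in> Bkq k q. \<forall>x\<in>cube k. \<phi> x \<ge> 0}"

definition uniqueness_set :: "nat \<Rightarrow> nat \<Rightarrow> (nat \<Rightarrow> real) set \<Rightarrow> bool" where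
  "uniqueness_set k q U \<longleftrightarrow> U \<subseteq> cube k \<and>
     (\<forall>\<phi>\<in>Bkq_plus k q. (\<forall>x\<in>U. \<phi> x = 0) \<longrightarrow> (\<forall>x\<in>cube k. \<phi> x = 0))"

definition hitting_set :: "nat \<Rightarrow> nat \<Rightarrow> (nat \<Rightarrow> real) set \<Rightarrow> bool" where
  "hitting_set k q H \<longleftrightarrow> H \<subseteq> cube k \<and>
     (\<forall>S. is_subcube k q S \<longrightarrow> H \<inter> S \<noteq> {})"

definition g :: "nat \<Rightarrow> nat \<Rightarrow> nat" where
  "g k q = (LEAST n. \<exists>H. hitting_set k q H \<and> card H = n)"

definition u :: "nat \<Rightarrow> nat \<Rightarrow> nat" where
  "u k q = (LEAST n. \<exists>U. uniqueness_set k q U \<and> card U = n)"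

end

theory Submission
  imports Defs
begin

text \<open>The indicator of the subcube fixing the coordinates in \<open>Q\<close> to the signs \<open>a\<close> is the
  product of the \<open>(1 + a j x j) / 2\<close> over \<open>j \<in> Q\<close>: a nonnegative element of \<open>B^k_q\<close>. A set
  missing this subcube is a zero set of it, while the function itself is not identically
  zero, so a set of uniqueness meets every \<open>(k-q)\<close>-subcube. The whole cube is a set of
  uniqueness, so \<open>u k q\<close> is attained, and its minimiser is a hitting set.\<close>

definition subcube_indicator :: "nat set \<Rightarrow> (nat \<Rightarrow> real) \<Rightarrow> (nat \<Rightarrow> real) \<Rightarrow> real" where
  "subcube_indicator Q a x = (\<Prod>j\<in>Q. (1 + a j * x j) / 2)"

lemma subcube_indicator_in_Bkq:
  assumes Q: "Q \<subseteq> {..<k}" "card Q \<le> q"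
  shows "subcube_indicator Q a \<in> Bkq k q"
proof -
  have fin: "finite Q" using Q finite_subset by blast
  define c where
    "c L = (if L \<subseteq> Q then (\<Prod>j\<in>L. a j / 2) * (\<Prod>j\<in>Q - L. (1/2::real)) else 0)" for L
  have "subcube_indicator Q a x = (\<Sum>L\<in>{L. L \<subseteq> {..<k} \<and> card L \<le> q}. c L * walsh L x)" for x
  proof -
    have "subcube_indicator Q a x = (\<Prod>j\<in>Q. a j * x j / 2 + 1/2)"
      unfolding subcube_indicator_def by (simp add: add_divide_distrib add.commute)
    also have "\<dots> = (\<Sum>L\<in>Pow Q. (\<Prod>j\<in>L. a j * x j / 2) * (\<Prod>j\<in>Q - L. (1/2::real)))"
      by (rule prod_add[OF fin])
    also have "\<dots> = (\<Sum>L\<in>Pow Q. c L * walsh L x)"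
      by (rule sum.cong) (auto simp: c_def walsh_def simp flip: prod.distrib intro!: prod.cong)
    also have "\<dots> = (\<Sum>L\<in>{L. L \<subseteq> {..<k} \<and> card L \<le> q}. c L * walsh L x)"
      by (rule sum.mono_neutral_left)
         (use Q fin in \<open>auto simp: c_def intro: card_mono order_trans\<close>)
    finally show ?thesis .
  qed
  then show ?thesis unfolding Bkq_def by blast
qed

lemma subcube_indicator_eq:
  assumes "Q \<subseteq> {..<k}" "\<forall>j\<in>Q. a j = 1 \<or> a j = -1" "x \<in> cube k"
  shows "subcube_indicator Q a x = (if x \<in> subcube k Q a then 1 else 0)"
proof -
  have fin: "finite Q" using assms(1) finite_subset by blast
  have factor: "(1 + a j * x j) / 2 = (if x j = a j then 1 else 0)" if "j \<in> Q" for j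
  proof -
    have "x j = 1 \<or> x j = -1" using that assms unfolding cube_def by auto
    then show ?thesis using assms(2) that by auto
  qed
  show ?thesis
    using assms(3) fin unfolding subcube_indicator_def subcube_def
    by (auto simp: factor)
qed

lemma subcube_indicator_in_Bkq_plus:
  assumes "Q \<subseteq> {..<k}" "card Q \<le> q" "\<forall>j\<in>Q. a j = 1 \<or> a j = -1"
  shows "subcube_indicator Q a \<in> Bkq_plus k q"
  using subcube_indicator_in_Bkq[OF assms(1,2)] subcube_indicator_eq[OF assms(1,3)]
  unfolding Bkq_plus_def by simp

lemma subcube_nonempty:
  assumes "Q \<subseteq> {..<k}" "\<forall>j\<in>Q. a j = 1 \<or> a j = -1"
  shows "subcube k Q a \<noteq> {}"
proof -
  define y where "y j = (if j < k then if j \<in> Q then a j else 1 else (0::real))" for j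
  have "y \<in> subcube k Q a"
    using assms unfolding y_def subcube_def cube_def by auto
  then show ?thesis by blast
qed

lemma uniqueness_set_imp_hitting_set:
  assumes U: "uniqueness_set k q U"
  shows "hitting_set k q U"
  unfolding hitting_set_def
proof (intro conjI allI impI)
  show U_cube: "U \<subseteq> cube k" using U unfolding uniqueness_set_def by blast
  fix S assume "is_subcube k q S"
  then obtain Q a where Q: "Q \<subseteq> {..<k}" "card Q = q" and a: "\<forall>j\<in>Q. a j = 1 \<or> a j = -1"
    and S: "S = subcube k Q a" unfolding is_subcube_def by blast
  show "U \<inter> S \<noteq> {}"
  proof
    assume disjoint: "U \<inter> S = {}"
    have "subcube_indicator Q a \<in> Bkq_plus k q"
      using subcube_indicator_in_Bkq_plus Q a by simp
    moreover have "\<forall>x\<in>U. subcube_indicator Q a x = 0"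
      using disjoint U_cube subcube_indicator_eq[OF Q(1) a] S
      by (simp add: disjoint_iff subset_iff)
    ultimately have "\<forall>x\<in>cube k. subcube_indicator Q a x = 0"
      using U unfolding uniqueness_set_def by blast
    moreover obtain y where "y \<in> S" using subcube_nonempty[OF Q(1) a] S by blast
    ultimately show False
      using subcube_indicator_eq[OF Q(1) a] S unfolding subcube_def by auto
  qed
qed

lemma uniqueness_set_cube: "uniqueness_set k q (cube k)"
  unfolding uniqueness_set_def by simp

theorem corollary2:
  fixes k q :: nat
  assumes "1 \<le> q" and "q \<le> k"
  shows "g k q \<le> u k q"
proof -
  have "\<exists>U. uniqueness_set k q U \<and> card U = u k q"
    unfolding u_def by (rule LeastI_ex) (use uniqueness_set_cube in blast)
  then obtain U where "uniqueness_set k q U" "card U = u k q" by blast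
  then have "hitting_set k q U" "card U = u k q"
    using uniqueness_set_imp_hitting_set by auto
  then show ?thesis unfolding g_def by (auto intro: Least_le)
qed

end
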